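(* Let $E$ and $F$ be complex Banach spaces, let $A_m:\mathrm{dom}(A_m)\subseteq E\to E$ and $B:\mathrm{dom}(B)\subseteq F\to F$ be linear operators, and let $L:\mathrm{dom}(A_m)\to F$ be linear, surjective and bounded with respect to the graph norm of $A_m$. Assume that the restriction $A_0$ of $A_m$ to $\ker(L)$ generates a bounded analytic semigroup $(T_0(t))_{t\ge0}$ on $E$, that $B$ generates a strongly continuous semigroup $(S(t))_{t\ge0}$ on $F$, that $x\mapsto(A_mx,Lx)$, $\mathrm{dom}(A_m)\to E\times F$, is closed, and that $A_0$ and $B$ are boundedly invertible. Let $D_0:=(L|_{\ker(A_m)})^{-1}:F\to E$. Assume moreover that for $y\in\mathrm{dom}(B)$ and $t\ge0$ the operators $Q(t)y=D_0S(t)y-T_0(t)D_0y-\int_0^tT_0(t-s)D_0S(s)By\,\mathrm{d}s$ extend to bounded operators $F\to E$ with $\limsup_{t\downarrow0}\|Q(t)\|<\infty$. Then for every $t_{\max}>0$ there is $C\ge0$ such that for every $h\in[0,t_{\max}]$, every $s_0,s_1\in[0,h]$ and every $y\in\mathrm{dom}(B^2)$, \[ \Bigl\|\int_0^hT_0(h-s)A_0^{-1}D_0S(s)By\,\mathrm{d}s-hT_0(h-s_0)A_0^{-1}D_0S(s_1)By\Bigr\|\le Ch^2\bigl(\|By\|+\|B^2y\|\bigr). \]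
   Context: Under the stated assumptions $L|_{\ker(A_m)}$ is bijective onto $F$ and $D_0$ is a bounded operator $F\to E$. *)

theory Defs
  imports "HOL-Analysis.Analysis"
begin

text \<open>HOL-Analysis has no complex vector space class; a complex Banach space is a real
Banach space with a compatible complex scalar multiplication and absolutely homogeneous norm.\<close>

class complex_banach = banach +
  fixes scaleC :: "complex \<Rightarrow> 'a \<Rightarrow> 'a" (infixr \<open>*\<^sub>C\<close> 75)
  assumes scaleC_of_real: "complex_of_real r *\<^sub>C x = r *\<^sub>R x"
    and scaleC_add_right: "a *\<^sub>C (x + y) = a *\<^sub>C x + a *\<^sub>C y"
    and scaleC_add_left: "(a + b) *\<^sub>C x = a *\<^sub>C x + b *\<^sub>C x"
    and scaleC_scaleC: "a *\<^sub>C (b *\<^sub>C x) = (a * b) *\<^sub>C x"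
    and scaleC_one: "1 *\<^sub>C x = x"
    and norm_scaleC: "norm (a *\<^sub>C x) = cmod a * norm x"

definition csubspace :: "'a::complex_banach set \<Rightarrow> bool" where
  "csubspace D \<longleftrightarrow> 0 \<in> D \<and> (\<forall>x\<in>D. \<forall>y\<in>D. x + y \<in> D) \<and> (\<forall>c. \<forall>x\<in>D. c *\<^sub>C x \<in> D)"

definition clinear_on :: "'a::complex_banach set \<Rightarrow> ('a \<Rightarrow> 'b::complex_banach) \<Rightarrow> bool" where
  "clinear_on D f \<longleftrightarrow> csubspace D \<and> (\<forall>x\<in>D. \<forall>y\<in>D. f (x + y) = f x + f y)
      \<and> (\<forall>c. \<forall>x\<in>D. f (c *\<^sub>C x) = c *\<^sub>C f x)"

definition bounded_clinear :: "('a::complex_banach \<Rightarrow> 'b::complex_banach) \<Rightarrow> bool" where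
  "bounded_clinear f \<longleftrightarrow> bounded_linear f \<and> (\<forall>c x. f (c *\<^sub>C x) = c *\<^sub>C f x)"

definition C0_semigroup :: "(real \<Rightarrow> 'a::complex_banach \<Rightarrow> 'a) \<Rightarrow> bool" where
  "C0_semigroup T \<longleftrightarrow> (\<forall>t\<ge>0. bounded_clinear (T t)) \<and> T 0 = id
     \<and> (\<forall>t\<ge>0. \<forall>s\<ge>0. T (t + s) = T t \<circ> T s)
     \<and> (\<forall>x. continuous_on {0..} (\<lambda>t. T t x))"

definition generates :: "('a::complex_banach \<Rightarrow> 'a) \<Rightarrow> 'a set \<Rightarrow> (real \<Rightarrow> 'a \<Rightarrow> 'a) \<Rightarrow> bool" where
  "generates A D T \<longleftrightarrow> C0_semigroup T
     \<and> D = {x. \<exists>y. ((\<lambda>h. (1 / h) *\<^sub>R (T h x - x)) \<longlongrightarrow> y) (at_right 0)}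
     \<and> (\<forall>x\<in>D. ((\<lambda>h. (1 / h) *\<^sub>R (T h x - x)) \<longlongrightarrow> A x) (at_right 0))"

definition sector :: "real \<Rightarrow> complex set" where
  "sector \<delta> = {z. z \<noteq> 0 \<and> \<bar>Arg z\<bar> < \<delta>}"

definition op_holomorphic_on :: "(complex \<Rightarrow> 'a::complex_banach \<Rightarrow> 'a) \<Rightarrow> complex set \<Rightarrow> bool" where
  "op_holomorphic_on T U \<longleftrightarrow> (\<forall>z\<in>U. \<exists>T'. bounded_clinear T' \<and>
     ((\<lambda>w. onorm (\<lambda>x. inverse (w - z) *\<^sub>C (T w x - T z x) - T' x)) \<longlongrightarrow> 0) (at z))"

definition bounded_analytic_semigroup :: "(real \<Rightarrow> 'a::complex_banach \<Rightarrow> 'a) \<Rightarrow> bool" where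
  "bounded_analytic_semigroup T \<longleftrightarrow> C0_semigroup T \<and>
     (\<exists>\<delta>\<in>{0<..pi/2}. \<exists>TT.
        (\<forall>t>0. TT (complex_of_real t) = T t)
      \<and> (\<forall>z\<in>sector \<delta>. bounded_clinear (TT z))
      \<and> (\<forall>z1\<in>sector \<delta>. \<forall>z2\<in>sector \<delta>. TT (z1 + z2) = TT z1 \<circ> TT z2)
      \<and> op_holomorphic_on TT (sector \<delta>)
      \<and> (\<forall>\<delta>'\<in>{0<..<\<delta>}. (\<forall>x. ((\<lambda>z. TT z x) \<longlongrightarrow> x) (at 0 within sector \<delta>'))
                        \<and> bounded ((\<lambda>z. onorm (TT z)) ` sector \<delta>')))"

end

theory Submission
  imports Defs
begin

(*
  Over s in [0, h] the integrand T0 (h - s) A0^-1 D0 S(s) B y moves by at most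
  C h (|B y| + |B^2 y|): replacing S(s) by S(s1) costs |s - s1| |B^2 y| because orbits of
  elements of dom B are Lipschitz, and replacing T0 (h - s) by T0 (h - s0) costs
  |s - s0| |A0 A0^-1 D0 S(s1) B y| <= C h |B y| for the same reason. Comparing the integral
  over [0, h] with h times one value of the integrand therefore costs C h^2.

  The constants come from three consequences of the Baire category theorem: uniform bounds
  for a C0-semigroup on compact time intervals, the Lipschitz bound |T(t) x - x| <= K t |A x|
  (uniform boundedness of the difference quotients composed with A^-1), and the boundedness
  of the Dirichlet operator D0 = (L restricted to ker Am)^-1 (closed graph theorem).
*)

section \<open>Consequences of the Baire category theorem\<close>

lemma Baire_closed_cover_contains_ball:
  fixes F :: "nat \<Rightarrow> 'a::banach set"
  assumes closed: "\<And>n. closed (F n)" and cover: "\<And>x. \<exists>n. x \<in> F n"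
  shows "\<exists>n x r. r > 0 \<and> ball x r \<subseteq> F n"
proof (rule ccontr)
  assume no_ball: "\<not> ?thesis"
  have "interior (F n) = {}" for n
  proof -
    have False if "x \<in> interior (F n)" for x
    proof -
      obtain r where "r > 0" "ball x r \<subseteq> F n" using \<open>x \<in> interior (F n)\<close> mem_interior by blast
      with no_ball show False by blast
    qed
    then show ?thesis by blast
  qed
  then have "euclidean interior_of \<Union>(range F) = {}"
    using closed completely_metrizable_space_euclidean
    by (intro Baire_category_alt) auto
  moreover have "\<Union>(range F) = UNIV" using cover by auto
  ultimately show False by simp
qed

lemma subadditive_sublevel_approximates_ball:
  fixes p :: "'a::banach \<Rightarrow> real"
  assumes p_diff: "\<And>x y. p (x - y) \<le> p x + p y"
  shows "\<exists>r>0. \<exists>c. \<forall>v e. norm v < r \<longrightarrow> e > 0 \<longrightarrow> (\<exists>a. p a \<le> c \<and> norm (a - v) < e)"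
proof -
  define F where "F n = closure {x. p x \<le> real n}" for n
  have "\<exists>n. x \<in> F n" for x
  proof -
    obtain n where "p x \<le> real n" using real_arch_simple by blast
    then have "x \<in> F n" unfolding F_def by (intro closure_subset[THEN subsetD]) simp
    then show ?thesis ..
  qed
  moreover have "closed (F n)" for n by (simp add: F_def)
  ultimately obtain n x0 r where r: "r > 0" and ball: "ball x0 r \<subseteq> F n"
    using Baire_closed_cover_contains_ball by meson
  have "\<exists>a. p a \<le> 2 * real n \<and> norm (a - v) < e" if "norm v < r" "e > 0" for v e
  proof -
    have "x0 + v \<in> F n" "x0 \<in> F n" using ball that r by (auto simp: dist_norm)
    then have "\<forall>\<epsilon>>0. \<exists>a. p a \<le> n \<and> dist a (x0 + v) < \<epsilon>"
      and "\<forall>\<epsilon>>0. \<exists>a. p a \<le> n \<and> dist a x0 < \<epsilon>"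
      unfolding F_def closure_approachable by simp_all
    then obtain a1 a2 where a: "p a1 \<le> n" "dist a1 (x0 + v) < e/2" "p a2 \<le> n" "dist a2 x0 < e/2"
      using half_gt_zero[OF \<open>e > 0\<close>] by meson
    have "norm ((a1 - a2) - v) = norm ((a1 - (x0 + v)) - (a2 - x0))"
      by (simp add: algebra_simps)
    also have "\<dots> \<le> dist a1 (x0 + v) + dist a2 x0"
      unfolding dist_norm by (rule norm_triangle_ineq4)
    finally have "norm ((a1 - a2) - v) < e" using a by linarith
    moreover have "p (a1 - a2) \<le> 2 * real n" using p_diff[of a1 a2] a by linarith
    ultimately show ?thesis by blast
  qed
  then show ?thesis using r by blast
qed

lemma subadditive_almost_bounded:
  fixes p :: "'a::banach \<Rightarrow> real"
  assumes p_diff: "\<And>x y. p (x - y) \<le> p x + p y"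
    and p_scale: "\<And>c x. p (c *\<^sub>R x) \<le> \<bar>c\<bar> * p x"
  shows "\<exists>M\<ge>0. \<forall>v e. e > 0 \<longrightarrow> (\<exists>a. p a \<le> M * norm v \<and> norm (a - v) < e)"
proof -
  obtain r c where r: "r > 0"
    and dense: "\<And>v e. norm v < r \<Longrightarrow> e > 0 \<Longrightarrow> \<exists>a. p a \<le> c \<and> norm (a - v) < e"
    using subadditive_sublevel_approximates_ball[OF p_diff] by blast
  have "c \<ge> 0"
  proof -
    obtain a where "p a \<le> c" using dense[of 0 1] r by auto
    moreover have "p a \<ge> 0" using p_diff[of a a] p_diff[of 0 0] by simp
    ultimately show ?thesis by linarith
  qed
  define M where "M = 2 * c / r"
  have "\<exists>a. p a \<le> M * norm v \<and> norm (a - v) < e" if e: "e > 0" for v e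
  proof (cases "v = 0")
    case True
    then show ?thesis using e p_scale[of 0 0] by (intro exI[of _ 0]) simp
  next
    case False
    define k where "k = r / (2 * norm v)"
    have k: "k > 0" "norm (k *\<^sub>R v) < r" using False r by (simp_all add: k_def)
    then obtain a where a: "p a \<le> c" "norm (a - k *\<^sub>R v) < e * k"
      using dense e by (meson mult_pos_pos)
    have "p ((1/k) *\<^sub>R a) \<le> c / k"
      using p_scale[of "1/k" a] a k divide_right_mono[of "p a" c k] by simp
    also have "c / k = M * norm v" using False r by (simp add: k_def M_def)
    finally have "p ((1/k) *\<^sub>R a) \<le> M * norm v" .
    moreover have "(1/k) *\<^sub>R a - v = (1/k) *\<^sub>R (a - k *\<^sub>R v)" using k by (simp add: algebra_simps)
    then have "norm ((1/k) *\<^sub>R a - v) < e" using a k by (simp add: pos_divide_less_eq)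
    ultimately show ?thesis by blast
  qed
  moreover have "M \<ge> 0" using \<open>c \<ge> 0\<close> r by (simp add: M_def)
  ultimately show ?thesis by blast
qed

lemma almost_bounded_series:
  fixes p :: "'a::real_normed_vector \<Rightarrow> real"
  assumes approx: "\<And>w e. e > 0 \<Longrightarrow> \<exists>a. p a \<le> M * norm w \<and> norm (a - w) < e"
    and "M \<ge> 0" and "v \<noteq> 0"
  shows "\<exists>a. (\<forall>k. p (a k) \<le> M * norm v / 2 ^ k) \<and> (\<lambda>m. \<Sum>k<m. a k) \<longlonglongrightarrow> v"
proof -
  define pick where "pick w e = (SOME a. p a \<le> M * norm w \<and> norm (a - w) < e)" for w e
  have pick: "p (pick w e) \<le> M * norm w \<and> norm (pick w e - w) < e" if "e > 0" for w e
    unfolding pick_def by (rule someI_ex[OF approx[OF that]])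
  define \<epsilon> where "\<epsilon> k = norm v / 2 ^ Suc k" for k
  have \<epsilon>: "\<epsilon> k > 0" for k using \<open>v \<noteq> 0\<close> by (simp add: \<epsilon>_def)
  define residual where "residual = rec_nat v (\<lambda>k w. w - pick w (\<epsilon> k))"
  define a where "a k = pick (residual k) (\<epsilon> k)" for k
  have residual_0: "residual 0 = v" and residual_Suc: "residual (Suc k) = residual k - a k" for k
    by (simp_all add: residual_def a_def)
  have residual_bound: "norm (residual k) \<le> norm v / 2 ^ k" for k
  proof (induction k)
    case (Suc k)
    have "norm (residual (Suc k)) = norm (a k - residual k)" by (simp add: residual_Suc norm_minus_commute)
    also have "\<dots> < \<epsilon> k" using pick[OF \<epsilon>] by (simp add: a_def)
    finally show ?case by (simp add: \<epsilon>_def)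
  qed (simp add: residual_0)
  have "p (a k) \<le> M * norm v / 2 ^ k" for k
  proof -
    have "p (a k) \<le> M * norm (residual k)" using pick[OF \<epsilon>] by (simp add: a_def)
    also have "\<dots> \<le> M * (norm v / 2 ^ k)" by (rule mult_left_mono[OF residual_bound \<open>M \<ge> 0\<close>])
    finally show ?thesis by simp
  qed
  moreover have "(\<lambda>m. \<Sum>k<m. a k) \<longlonglongrightarrow> v"
  proof -
    have "(\<Sum>k<m. a k) = v - residual m" for m
      by (induction m) (simp_all add: residual_0 residual_Suc)
    moreover have "residual \<longlonglongrightarrow> 0"
    proof (rule Lim_null_comparison)
      show "\<forall>\<^sub>F k in sequentially. norm (residual k) \<le> norm v * (1/2) ^ k"
        using residual_bound by (simp add: power_one_over field_simps)
      show "(\<lambda>k. norm v * (1/2::real) ^ k) \<longlonglongrightarrow> 0"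
        by (intro tendsto_mult_right_zero LIMSEQ_power_zero) simp
    qed
    then have "(\<lambda>m. v - residual m) \<longlonglongrightarrow> v - 0" by (intro tendsto_diff) auto
    ultimately show ?thesis by simp
  qed
  ultimately show ?thesis by blast
qed

lemma closed_graph_theorem:
  fixes D :: "'a::banach \<Rightarrow> 'b::banach"
  assumes lin: "linear D"
    and closed_graph: "\<And>xs x y. xs \<longlonglongrightarrow> x \<Longrightarrow> (\<lambda>n. D (xs n)) \<longlonglongrightarrow> y \<Longrightarrow> D x = y"
  shows "bounded_linear D"
proof -
  obtain M where M: "M \<ge> 0"
    and approx: "\<And>v e. e > 0 \<Longrightarrow> \<exists>a. norm (D a) \<le> M * norm v \<and> norm (a - v) < e"
    using subadditive_almost_bounded[of "\<lambda>x. norm (D x)"]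
    by (metis linear_diff[OF lin] linear_scale[OF lin] norm_scaleR norm_triangle_ineq4 order_refl)
  have "norm (D v) \<le> norm v * (2 * M)" for v
  proof (cases "v = 0")
    case False
    then obtain a where a: "\<And>k. norm (D (a k)) \<le> M * norm v / 2 ^ k"
      and partial_sums: "(\<lambda>m. \<Sum>k<m. a k) \<longlonglongrightarrow> v"
      using almost_bounded_series[of "\<lambda>x. norm (D x)", OF approx M] by blast
    have geometric: "(\<lambda>k. M * norm v * (1/2) ^ k) sums (M * norm v * 2)"
      using sums_mult[OF geometric_sums[of "1/2::real"]] by simp
    have a': "norm (D (a k)) \<le> M * norm v * (1/2) ^ k" for k
      using a[of k] by (simp add: power_one_over)
    have summable: "summable (\<lambda>k. norm (D (a k)))"
      by (rule summable_comparison_test'[OF sums_summable[OF geometric]]) (simp add: a')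
    have "(\<lambda>m. D (\<Sum>k<m. a k)) \<longlonglongrightarrow> (\<Sum>k. D (a k))"
      using summable_LIMSEQ[OF summable_norm_cancel[OF summable]] by (simp add: linear_sum[OF lin])
    then have "D v = (\<Sum>k. D (a k))" by (rule closed_graph[OF partial_sums])
    also have "norm \<dots> \<le> (\<Sum>k. norm (D (a k)))" by (rule summable_norm[OF summable])
    also have "\<dots> \<le> M * norm v * 2"
      using suminf_le[OF _ summable sums_summable[OF geometric]] a' sums_unique[OF geometric] by auto
    finally show ?thesis by (simp add: algebra_simps)
  qed (simp add: linear_0[OF lin])
  then show ?thesis
    using lin by (intro bounded_linear_intro[where K = "2 * M"]) (auto simp: linear_add linear_scale)
qed

lemma uniform_boundedness:
  fixes T :: "'i \<Rightarrow> 'a::banach \<Rightarrow> 'b::real_normed_vector"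
  assumes bl: "\<And>i. i \<in> I \<Longrightarrow> bounded_linear (T i)"
    and pointwise: "\<And>x. \<exists>c. \<forall>i\<in>I. norm (T i x) \<le> c"
  shows "\<exists>M\<ge>0. \<forall>i\<in>I. \<forall>x. norm (T i x) \<le> M * norm x"
proof (cases "I = {}")
  case False
  define p where "p x = (SUP i\<in>I. norm (T i x))" for x
  have le_p: "norm (T i x) \<le> p x" if "i \<in> I" for i x
  proof -
    obtain c where "\<forall>i\<in>I. norm (T i x) \<le> c" using pointwise by blast
    then show ?thesis
      unfolding p_def using that by (intro cSUP_upper bdd_aboveI2[of _ _ c]) auto
  qed
  have "p (x - y) \<le> p x + p y" for x y
    unfolding p_def[of "x - y"] using False
    by (intro cSUP_least) (auto simp: bl linear_simps intro: order_trans[OF norm_triangle_ineq4] add_mono le_p)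
  moreover have "p (c *\<^sub>R x) \<le> \<bar>c\<bar> * p x" for c x
    unfolding p_def[of "c *\<^sub>R x"] using False
    by (intro cSUP_least) (auto simp: bl linear_simps intro: mult_left_mono le_p)
  ultimately obtain M where "M \<ge> 0"
    and approx: "\<And>v e. e > 0 \<Longrightarrow> \<exists>a. p a \<le> M * norm v \<and> norm (a - v) < e"
    using subadditive_almost_bounded[of p] by blast
  have "norm (T i v) \<le> M * norm v" if i: "i \<in> I" for i v
  proof -
    obtain K where K: "K > 0" "\<And>x. norm (T i x) \<le> norm x * K"
      using bounded_linear.pos_bounded[OF bl[OF i]] by blast
    (* T i is continuous, so the bound for p at points near v passes to v itself. *)
    show ?thesis
    proof (rule field_le_epsilon)
      fix \<epsilon> :: real assume "\<epsilon> > 0"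
      then obtain a where a: "p a \<le> M * norm v" "norm (a - v) < \<epsilon> / K"
        using approx K(1) by (meson divide_pos_pos)
      have "norm (T i v) \<le> norm (T i a) + norm (T i (v - a))"
        using norm_triangle_sub[of "T i v" "T i a"] by (simp add: linear_simps[OF bl[OF i]])
      also have "\<dots> \<le> M * norm v + norm (v - a) * K"
        using le_p[OF i, of a] a(1) K(2)[of "v - a"] by linarith
      also have "norm (v - a) * K \<le> \<epsilon>"
        using a(2) K(1) by (simp add: norm_minus_commute pos_less_divide_eq less_imp_le)
      finally show "norm (T i v) \<le> M * norm v + \<epsilon>" by simp
    qed
  qed
  then show ?thesis using \<open>M \<ge> 0\<close> by blast
qed auto

section \<open>Operators defined on subspaces\<close>

lemma scaleC_zero_right: "c *\<^sub>C (0::'a::complex_banach) = 0"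
  using scaleC_add_right[of c "0::'a" 0] by simp

lemma clinear_on_add:
  assumes "clinear_on X f" "x \<in> X" "y \<in> X"
  shows "x + y \<in> X \<and> f (x + y) = f x + f y"
  using assms unfolding clinear_on_def csubspace_def by blast

lemma clinear_on_scaleR:
  assumes "clinear_on X f" "x \<in> X"
  shows "r *\<^sub>R x \<in> X \<and> f (r *\<^sub>R x) = r *\<^sub>R f x"
  using assms unfolding clinear_on_def csubspace_def by (metis scaleC_of_real)

lemma clinear_on_diff:
  assumes "clinear_on X f" "x \<in> X" "y \<in> X"
  shows "x - y \<in> X \<and> f (x - y) = f x - f y"
  using clinear_on_add[OF assms(1,2), of "(-1) *\<^sub>R y"] clinear_on_scaleR[OF assms(1,3), of "-1"]
  by simp

lemma clinear_on_kernel: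
  assumes A: "clinear_on X A" and L: "clinear_on X L"
  shows "clinear_on {x\<in>X. A x = 0} L"
proof -
  have "0 \<in> X" using A unfolding clinear_on_def csubspace_def by blast
  moreover have "A 0 = 0" using clinear_on_diff[OF A \<open>0 \<in> X\<close> \<open>0 \<in> X\<close>] by simp
  ultimately show ?thesis
    using A L unfolding clinear_on_def csubspace_def by (simp add: scaleC_zero_right)
qed

lemma linear_inv_into:
  assumes lin: "clinear_on K f" and bij: "bij_betw f K UNIV"
  shows "linear (inv_into K f)"
proof -
  let ?g = "inv_into K f"
  have g: "?g y \<in> K" "f (?g y) = y" for y
    using bij_betw_inv_into[OF bij] bij_betw_inv_into_right[OF bij] by (auto simp: bij_betw_def)
  have eq: "u = ?g y" if "u \<in> K" "f u = y" for u y
    using bij_betw_inv_into_left[OF bij that(1)] that(2) by simp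
  show ?thesis
  proof
    show "?g (y + z) = ?g y + ?g z" for y z
      using clinear_on_add[OF lin g(1) g(1)] g by (metis eq)
    show "?g (r *\<^sub>R y) = r *\<^sub>R ?g y" for r y
      using clinear_on_scaleR[OF lin g(1)] g by (metis eq)
  qed
qed

lemma bij_betw_kernel_restriction:
  assumes A: "clinear_on X A" and L: "clinear_on X L" and surj: "L ` X = UNIV"
    and bij: "bij_betw A {x\<in>X. L x = 0} UNIV"
  shows "bij_betw L {x\<in>X. A x = 0} UNIV"
  unfolding bij_betw_def
proof
  show "inj_on L {x\<in>X. A x = 0}"
  proof (rule inj_onI)
    fix x y assume x: "x \<in> {x\<in>X. A x = 0}" and y: "y \<in> {x\<in>X. A x = 0}" and "L x = L y"
    then have "x - y \<in> {x\<in>X. L x = 0}" "x - x \<in> {x\<in>X. L x = 0}"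
      using clinear_on_diff[OF L, of x y] clinear_on_diff[OF L, of x x] by auto
    moreover have "A (x - y) = A (x - x)"
      using x y clinear_on_diff[OF A, of x y] clinear_on_diff[OF A, of x x] by auto
    ultimately have "x - y = x - x"
      using bij unfolding bij_betw_def by (blast dest: inj_onD)
    then show "x = y" by simp
  qed
  have "f \<in> L ` {x\<in>X. A x = 0}" for f
  proof -
    obtain x where x: "x \<in> X" "L x = f" using surj by (metis UNIV_I imageE)
    define w where "w = inv_into {x\<in>X. L x = 0} A (A x)"
    have w: "w \<in> X" "L w = 0" "A w = A x"
      using bij_betw_inv_into[OF bij] bij_betw_inv_into_right[OF bij]
      unfolding w_def bij_betw_def by auto
    then have "x - w \<in> {x\<in>X. A x = 0}" "f = L (x - w)"
      using clinear_on_diff[OF A x(1) w(1)] clinear_on_diff[OF L x(1) w(1)] x by auto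
    then show ?thesis by (rule rev_image_eqI)
  qed
  then show "L ` {x\<in>X. A x = 0} = UNIV" by blast
qed

lemma Dirichlet_operator_bounded:
  fixes A :: "'a::complex_banach \<Rightarrow> 'b::complex_banach" and L :: "'a \<Rightarrow> 'c::complex_banach"
  assumes A: "clinear_on X A" and L: "clinear_on X L" and surj: "L ` X = UNIV"
    and closed: "closed {(x, A x, L x) | x. x \<in> X}"
    and bij: "bij_betw A {x\<in>X. L x = 0} UNIV"
  shows "bounded_linear (inv_into {x\<in>X. A x = 0} L)"
proof -
  let ?K = "{x\<in>X. A x = 0}"
  let ?D = "inv_into ?K L"
  have bij_L: "bij_betw L ?K UNIV"
    by (rule bij_betw_kernel_restriction[OF A L surj bij])
  have D: "?D f \<in> ?K" "L (?D f) = f" for f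
    using bij_betw_inv_into[OF bij_L] bij_betw_inv_into_right[OF bij_L] by (auto simp: bij_betw_def)
  show ?thesis
  proof (rule closed_graph_theorem)
    show "linear ?D" by (rule linear_inv_into[OF clinear_on_kernel[OF A L] bij_L])
    fix fs f y assume "fs \<longlonglongrightarrow> f" and "(\<lambda>n. ?D (fs n)) \<longlonglongrightarrow> y"
    then have "(\<lambda>n. (?D (fs n), A (?D (fs n)), L (?D (fs n)))) \<longlonglongrightarrow> (y, 0, f)"
      using D by (simp add: tendsto_Pair)
    then have "(y, 0, f) \<in> {(x, A x, L x) | x. x \<in> X}"
      by (rule closed_sequentially[OF closed, rotated]) (use D in auto)
    then have "y \<in> ?K" "L y = f" by auto
    then show "?D f = y" using bij_betw_inv_into_left[OF bij_L] by metis
  qed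
qed

section \<open>Strongly continuous semigroups\<close>

lemma C0_semigroup_bounded_linear: "C0_semigroup T \<Longrightarrow> t \<ge> 0 \<Longrightarrow> bounded_linear (T t)"
  by (simp add: C0_semigroup_def bounded_clinear_def)

lemma C0_semigroup_bounded_on_interval:
  assumes "C0_semigroup T"
  shows "\<exists>M\<ge>0. \<forall>t\<in>{0..a}. \<forall>x. norm (T t x) \<le> M * norm x"
proof (rule uniform_boundedness)
  show "bounded_linear (T t)" if "t \<in> {0..a}" for t
    using C0_semigroup_bounded_linear[OF assms] that by simp
  show "\<exists>c. \<forall>t\<in>{0..a}. norm (T t x) \<le> c" for x
  proof -
    have "continuous_on {0..a} (\<lambda>t. T t x)"
      by (rule continuous_on_subset[of "{0..}"]) (use assms in \<open>auto simp: C0_semigroup_def\<close>)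
    then have "bounded ((\<lambda>t. T t x) ` {0..a})"
      by (intro compact_imp_bounded compact_continuous_image) auto
    then show ?thesis unfolding bounded_iff by auto
  qed
qed

lemma C0_semigroup_continuous_on_reversed:
  assumes C0: "C0_semigroup T" and g: "continuous_on {0..h} g"
  shows "continuous_on {0..h} (\<lambda>s. T (h - s) (g s))"
  unfolding continuous_on_def
proof
  fix s0 assume s0: "s0 \<in> {0..h}"
  obtain M where M: "\<And>t x. t \<in> {0..h} \<Longrightarrow> norm (T t x) \<le> M * norm x"
    using C0_semigroup_bounded_on_interval[OF C0] by blast
  have bl: "bounded_linear (T (h - s))" if "s \<in> {0..h}" for s
    using C0_semigroup_bounded_linear[OF C0] that by simp
  have "continuous_on {0..} (\<lambda>t. T t (g s0))" using C0 by (simp add: C0_semigroup_def)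
  then have "continuous_on {0..h} (\<lambda>s. T (h - s) (g s0))"
    by (rule continuous_on_compose2[where f = "\<lambda>s. h - s"]) (auto intro!: continuous_intros)
  then have orbit: "((\<lambda>s. T (h - s) (g s0)) \<longlongrightarrow> T (h - s0) (g s0)) (at s0 within {0..h})"
    using s0 unfolding continuous_on_def by blast
  have "((\<lambda>s. M * norm (g s - g s0)) \<longlongrightarrow> M * norm (g s0 - g s0)) (at s0 within {0..h})"
    using g s0 unfolding continuous_on_def by (intro tendsto_intros) auto
  then have "((\<lambda>s. M * norm (g s - g s0)) \<longlongrightarrow> 0) (at s0 within {0..h})" by simp
  moreover have "\<forall>\<^sub>F s in at s0 within {0..h}. norm (T (h - s) (g s - g s0)) \<le> M * norm (g s - g s0)"
    unfolding eventually_at_filter by (intro always_eventually) (auto intro: M)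
  ultimately have "((\<lambda>s. T (h - s) (g s - g s0)) \<longlongrightarrow> 0) (at s0 within {0..h})"
    by (rule Lim_null_comparison[rotated])
  from tendsto_add[OF this orbit]
  have lim: "((\<lambda>s. T (h - s) (g s - g s0) + T (h - s) (g s0)) \<longlongrightarrow> T (h - s0) (g s0)) (at s0 within {0..h})"
    by simp
  have eq: "\<forall>\<^sub>F s in at s0 within {0..h}. T (h - s) (g s - g s0) + T (h - s) (g s0) = T (h - s) (g s)"
    unfolding eventually_at_filter by (intro always_eventually) (auto simp: linear_simps[OF bl])
  from lim show "((\<lambda>s. T (h - s) (g s)) \<longlongrightarrow> T (h - s0) (g s0)) (at s0 within {0..h})"
    unfolding tendsto_cong[OF eq] .
qed

lemma generates_difference_quotient_bounded:
  assumes gen: "generates A D T" and x: "x \<in> D"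
  shows "\<exists>c. \<forall>t\<in>{0..a}. norm ((1 / t) *\<^sub>R (T t x - x)) \<le> c"
proof -
  have C0: "C0_semigroup T" using gen by (simp add: generates_def)
  have "((\<lambda>t. (1 / t) *\<^sub>R (T t x - x)) \<longlongrightarrow> A x) (at_right 0)"
    using gen x by (simp add: generates_def)
  from tendstoD[OF this, of 1]
  obtain \<delta> where \<delta>: "\<delta> > 0"
    and near: "\<And>t. 0 < t \<Longrightarrow> t < \<delta> \<Longrightarrow> dist ((1 / t) *\<^sub>R (T t x - x)) (A x) < 1"
    unfolding eventually_at_right_field by auto
  obtain M where M: "M \<ge> 0" "\<And>t x. t \<in> {0..a} \<Longrightarrow> norm (T t x) \<le> M * norm x"
    using C0_semigroup_bounded_on_interval[OF C0] by blast
  have "norm ((1 / t) *\<^sub>R (T t x - x)) \<le> max (norm (A x) + 1) ((M + 1) * norm x / \<delta>)"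
    if t: "t \<in> {0..a}" for t
  proof -
    consider "t = 0" | "0 < t" "t < \<delta>" | "\<delta> \<le> t" using t by force
    then show ?thesis
    proof cases
      case 2
      then show ?thesis using near[of t] norm_triangle_sub[of "(1 / t) *\<^sub>R (T t x - x)" "A x"]
        by (simp add: dist_norm le_max_iff_disj)
    next
      case 3
      have "norm (T t x - x) \<le> (M + 1) * norm x"
        using norm_triangle_ineq4[of "T t x" x] M(2)[OF t, of x] by (simp add: algebra_simps)
      then have "norm ((1 / t) *\<^sub>R (T t x - x)) \<le> (M + 1) * norm x / t"
        using 3 \<delta> by (simp add: divide_right_mono)
      also have "\<dots> \<le> (M + 1) * norm x / \<delta>"
        using 3 \<delta> M(1) by (intro divide_left_mono) auto
      finally show ?thesis by (simp add: le_max_iff_disj)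
    qed (simp add: le_max_iff_disj)
  qed
  then show ?thesis by blast
qed

lemma generates_increment_bound:
  assumes gen: "generates A D T" and bij: "bij_betw A D UNIV"
    and R: "bounded_linear (inv_into D A)"
  shows "\<exists>K\<ge>0. \<forall>x\<in>D. \<forall>t\<in>{0..a}. norm (T t x - x) \<le> K * t * norm (A x)"
proof -
  let ?R = "inv_into D A"
  have C0: "C0_semigroup T" using gen by (simp add: generates_def)
  have R_D: "?R w \<in> D" for w
    using bij_betw_inv_into[OF bij] by (auto simp: bij_betw_def)
  (* Uniform boundedness applies to the difference quotients composed with A^-1: pointwise
     they converge as t -> 0+ and are harmless for t away from 0. *)
  define q where "q t w = (1 / t) *\<^sub>R (T t (?R w) - ?R w)" for t w
  have "\<exists>K\<ge>0. \<forall>t\<in>{0..a}. \<forall>w. norm (q t w) \<le> K * norm w"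
  proof (rule uniform_boundedness)
    show "bounded_linear (q t)" if "t \<in> {0..a}" for t
    proof -
      have "bounded_linear (T t)" using C0_semigroup_bounded_linear[OF C0] that by simp
      from bounded_linear_compose[OF this R]
      have "bounded_linear (\<lambda>w. T t (?R w) - ?R w)" using R by (rule bounded_linear_sub)
      then show ?thesis unfolding q_def by (rule bounded_linear_const_scaleR)
    qed
    show "\<exists>c. \<forall>t\<in>{0..a}. norm (q t w) \<le> c" for w
      unfolding q_def by (rule generates_difference_quotient_bounded[OF gen R_D])
  qed
  then obtain K where K: "K \<ge> 0" "\<And>t w. t \<in> {0..a} \<Longrightarrow> norm (q t w) \<le> K * norm w"
    by blast
  have "norm (T t x - x) \<le> K * t * norm (A x)" if x: "x \<in> D" and t: "t \<in> {0..a}" for x t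
  proof (cases "t = 0")
    case True
    then show ?thesis using C0 by (simp add: C0_semigroup_def)
  next
    case False
    have "T t x - x = t *\<^sub>R q t (A x)"
      using False bij_betw_inv_into_left[OF bij x] by (simp add: q_def)
    moreover have "t * norm (q t (A x)) \<le> t * (K * norm (A x))"
      using K(2)[OF t] t by (intro mult_left_mono) auto
    ultimately show ?thesis using t by (simp add: ac_simps)
  qed
  with K(1) show ?thesis by blast
qed

lemma generates_Lipschitz:
  assumes gen: "generates A D T" and bij: "bij_betw A D UNIV"
    and R: "bounded_linear (inv_into D A)"
  shows "\<exists>K\<ge>0. \<forall>x\<in>D. \<forall>s\<in>{0..a}. \<forall>s'\<in>{0..a}.
    norm (T s x - T s' x) \<le> K * \<bar>s - s'\<bar> * norm (A x)"
proof -
  have C0: "C0_semigroup T" using gen by (simp add: generates_def)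
  obtain M where M: "M \<ge> 0" "\<And>t x. t \<in> {0..a} \<Longrightarrow> norm (T t x) \<le> M * norm x"
    using C0_semigroup_bounded_on_interval[OF C0] by blast
  obtain K where K: "K \<ge> 0"
    "\<And>x t. x \<in> D \<Longrightarrow> t \<in> {0..a} \<Longrightarrow> norm (T t x - x) \<le> K * t * norm (A x)"
    using generates_increment_bound[OF gen bij R] by blast
  have sg: "T (t + u) = T t \<circ> T u" if "t \<ge> 0" "u \<ge> 0" for t u
    using C0 that by (simp add: C0_semigroup_def)
  have ordered: "norm (T s x - T s' x) \<le> M * K * (s - s') * norm (A x)"
    if x: "x \<in> D" and s: "0 \<le> s'" "s' \<le> s" "s \<le> a" for x s s'
  proof -
    have "T s = T s' \<circ> T (s - s')" using sg[of s' "s - s'"] s by simp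
    then have "T s x - T s' x = T s' (T (s - s') x - x)"
      using C0_semigroup_bounded_linear[OF C0 s(1)] by (simp add: linear_simps)
    then have "norm (T s x - T s' x) \<le> M * norm (T (s - s') x - x)"
      using M(2) s by simp
    also have "\<dots> \<le> M * (K * (s - s') * norm (A x))"
      using K(2)[OF x] M(1) s by (intro mult_left_mono) auto
    finally show ?thesis by (simp add: ac_simps)
  qed
  have "norm (T s x - T s' x) \<le> M * K * \<bar>s - s'\<bar> * norm (A x)"
    if "x \<in> D" "s \<in> {0..a}" "s' \<in> {0..a}" for x s s'
  proof (cases "s' \<le> s")
    case True
    have "norm (T s x - T s' x) \<le> M * K * (s - s') * norm (A x)"
      using that True by (intro ordered) auto
    with True show ?thesis by simp
  next
    case False
    have "norm (T s' x - T s x) \<le> M * K * (s' - s) * norm (A x)"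
      using that False by (intro ordered) auto
    with False show ?thesis by (simp add: norm_minus_commute)
  qed
  moreover have "M * K \<ge> 0" using M(1) K(1) by simp
  ultimately show ?thesis by blast
qed

section \<open>The convolution estimate\<close>

lemma C0_semigroup_continuous_on_convolution_integrand:
  assumes T: "C0_semigroup T" and S: "C0_semigroup S" and P: "bounded_linear P"
  shows "continuous_on {0..h} (\<lambda>s. T (h - s) (P (S s z)))"
proof (rule C0_semigroup_continuous_on_reversed[OF T])
  have "continuous_on {0..h} (\<lambda>s. S s z)"
    by (rule continuous_on_subset[of "{0..}"]) (use S in \<open>auto simp: C0_semigroup_def\<close>)
  then show "continuous_on {0..h} (\<lambda>s. P (S s z))"
    by (rule bounded_linear.continuous_on[OF P])
qed

lemma convolution_integrand_inner_variation:
  assumes T: "C0_semigroup T" and Q: "bounded_linear Q"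
    and S: "generates B DB S" "bij_betw B DB UNIV" "bounded_linear (inv_into DB B)"
  shows "\<exists>C\<ge>0. \<forall>h\<in>{0..a}. \<forall>s\<in>{0..h}. \<forall>s'\<in>{0..h}. \<forall>z\<in>DB.
    norm (T (h - s) (Q (S s z)) - T (h - s) (Q (S s' z))) \<le> C * h * norm (B z)"
proof -
  obtain M where M: "M \<ge> 0" "\<And>t x. t \<in> {0..a} \<Longrightarrow> norm (T t x) \<le> M * norm x"
    using C0_semigroup_bounded_on_interval[OF T] by blast
  obtain K where K: "K \<ge> 0" "\<And>x t t'. x \<in> DB \<Longrightarrow> t \<in> {0..a} \<Longrightarrow> t' \<in> {0..a} \<Longrightarrow>
      norm (S t x - S t' x) \<le> K * \<bar>t - t'\<bar> * norm (B x)"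
    using generates_Lipschitz[OF S] by blast
  obtain c where c: "c \<ge> 0" "\<And>x. norm (Q x) \<le> norm x * c"
    using bounded_linear.nonneg_bounded[OF Q] by blast
  have "norm (T (h - s) (Q (S s z)) - T (h - s) (Q (S s' z))) \<le> M * c * K * h * norm (B z)"
    if h: "h \<in> {0..a}" "s \<in> {0..h}" "s' \<in> {0..h}" and z: "z \<in> DB" for h s s' z
  proof -
    have bl: "bounded_linear (T (h - s))" using C0_semigroup_bounded_linear[OF T] h by simp
    have "norm (T (h - s) (Q (S s z)) - T (h - s) (Q (S s' z))) = norm (T (h - s) (Q (S s z - S s' z)))"
      by (simp add: linear_simps[OF bl] linear_simps[OF Q])
    also have "\<dots> \<le> M * norm (Q (S s z - S s' z))"
      using M(2) h by auto
    also have "\<dots> \<le> M * (norm (S s z - S s' z) * c)"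
      by (intro mult_left_mono c(2) M(1))
    also have "\<dots> \<le> M * (K * \<bar>s - s'\<bar> * norm (B z) * c)"
      using K(2)[OF z] h M(1) c(1) by (intro mult_left_mono mult_right_mono) auto
    also have "\<dots> \<le> M * (K * h * norm (B z) * c)"
      using h M(1) c(1) K(1) by (intro mult_left_mono mult_right_mono) auto
    finally show ?thesis by (simp add: ac_simps)
  qed
  then show ?thesis using M(1) c(1) K(1) by (intro exI[of _ "M * c * K"]) auto
qed

lemma convolution_integrand_outer_variation:
  assumes T: "generates A DA T" "bij_betw A DA UNIV" "bounded_linear (inv_into DA A)"
    and S: "C0_semigroup S" and P: "bounded_linear P"
  shows "\<exists>C\<ge>0. \<forall>h\<in>{0..a}. \<forall>s\<in>{0..h}. \<forall>s'\<in>{0..h}. \<forall>r\<in>{0..h}. \<forall>z.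
    norm (T (h - s) (inv_into DA A (P (S r z))) - T (h - s') (inv_into DA A (P (S r z))))
      \<le> C * h * norm z"
proof -
  let ?R = "inv_into DA A"
  obtain K where K: "K \<ge> 0" "\<And>x t t'. x \<in> DA \<Longrightarrow> t \<in> {0..a} \<Longrightarrow> t' \<in> {0..a} \<Longrightarrow>
      norm (T t x - T t' x) \<le> K * \<bar>t - t'\<bar> * norm (A x)"
    using generates_Lipschitz[OF T] by blast
  obtain M where M: "M \<ge> 0" "\<And>t x. t \<in> {0..a} \<Longrightarrow> norm (S t x) \<le> M * norm x"
    using C0_semigroup_bounded_on_interval[OF S] by blast
  obtain c where c: "c \<ge> 0" "\<And>x. norm (P x) \<le> norm x * c"
    using bounded_linear.nonneg_bounded[OF P] by blast
  have R: "?R w \<in> DA" "A (?R w) = w" for w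
    using bij_betw_inv_into[OF T(2)] bij_betw_inv_into_right[OF T(2)] by (auto simp: bij_betw_def)
  have "norm (T (h - s) (?R (P (S r z))) - T (h - s') (?R (P (S r z)))) \<le> K * c * M * h * norm z"
    if h: "h \<in> {0..a}" "s \<in> {0..h}" "s' \<in> {0..h}" "r \<in> {0..h}" for h s s' r z
  proof -
    have "norm (T (h - s) (?R (P (S r z))) - T (h - s') (?R (P (S r z))))
        \<le> K * \<bar>s - s'\<bar> * norm (P (S r z))"
      using K(2)[OF R(1), of "h - s" "h - s'"] R(2) h by (simp add: abs_minus_commute)
    also have "\<dots> \<le> K * h * (norm (S r z) * c)"
      using h K(1) c by (intro mult_mono) auto
    also have "\<dots> \<le> K * h * (M * norm z * c)"
      using h K(1) c(1) M(2)[of r z] by (intro mult_left_mono mult_right_mono) auto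
    finally show ?thesis by (simp add: ac_simps)
  qed
  then show ?thesis using K(1) c(1) M(1) by (intro exI[of _ "K * c * M"]) auto
qed

lemma convolution_integrand_oscillation:
  fixes T :: "real \<Rightarrow> 'e::complex_banach \<Rightarrow> 'e" and S :: "real \<Rightarrow> 'f::complex_banach \<Rightarrow> 'f"
    and P :: "'f \<Rightarrow> 'e"
  assumes T: "generates A DA T" "bij_betw A DA UNIV" "bounded_linear (inv_into DA A)"
    and S: "generates B DB S" "bij_betw B DB UNIV" "bounded_linear (inv_into DB B)"
    and P: "bounded_linear P"
  shows "\<exists>C\<ge>0. \<forall>h\<in>{0..a}. \<forall>s\<in>{0..h}. \<forall>s0\<in>{0..h}. \<forall>s1\<in>{0..h}. \<forall>z\<in>DB.
    norm (T (h - s) (inv_into DA A (P (S s z))) - T (h - s0) (inv_into DA A (P (S s1 z))))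
      \<le> C * h * (norm z + norm (B z))"
proof -
  let ?v = "\<lambda>r z. inv_into DA A (P (S r z))"
  have C0: "C0_semigroup T" "C0_semigroup S"
    using T(1) S(1) by (simp_all add: generates_def)
  obtain C1 where C1: "C1 \<ge> 0" "\<forall>h\<in>{0..a}. \<forall>s\<in>{0..h}. \<forall>s'\<in>{0..h}. \<forall>z\<in>DB.
      norm (T (h - s) (?v s z) - T (h - s) (?v s' z)) \<le> C1 * h * norm (B z)"
    using convolution_integrand_inner_variation[OF C0(1) bounded_linear_compose[OF T(3) P] S]
    by blast
  obtain C2 where C2: "C2 \<ge> 0" "\<forall>h\<in>{0..a}. \<forall>s\<in>{0..h}. \<forall>s'\<in>{0..h}. \<forall>r\<in>{0..h}. \<forall>z.
      norm (T (h - s) (?v r z) - T (h - s') (?v r z)) \<le> C2 * h * norm z"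
    using convolution_integrand_outer_variation[OF T C0(2) P] by blast
  have "norm (T (h - s) (?v s z) - T (h - s0) (?v s1 z)) \<le> (C1 + C2) * h * (norm z + norm (B z))"
    if h: "h \<in> {0..a}" "s \<in> {0..h}" "s0 \<in> {0..h}" "s1 \<in> {0..h}" and z: "z \<in> DB"
    for h s s0 s1 z
  proof -
    have "norm (T (h - s) (?v s z) - T (h - s0) (?v s1 z)) \<le> C1 * h * norm (B z) + C2 * h * norm z"
      using C1(2) C2(2) h z by (intro norm_diff_triangle_le[of _ "T (h - s) (?v s1 z)"]) auto
    also have "\<dots> \<le> (C1 + C2) * h * (norm z + norm (B z))"
      using C1(1) C2(1) h by (simp add: algebra_simps)
    finally show ?thesis .
  qed
  then show ?thesis using C1(1) C2(1) by (intro exI[of _ "C1 + C2"]) auto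
qed

lemma integral_minus_constant_bound:
  fixes f :: "real \<Rightarrow> 'a::banach"
  assumes "0 \<le> h" and cont: "continuous_on {0..h} f"
    and bound: "\<And>s. s \<in> {0..h} \<Longrightarrow> norm (f s - c) \<le> e"
  shows "norm (integral {0..h} f - h *\<^sub>R c) \<le> e * h"
proof -
  have "integral {0..h} (\<lambda>s. f s - c) = integral {0..h} f - h *\<^sub>R c"
    using integral_diff[OF integrable_continuous_real[OF cont] integrable_const_ivl] \<open>0 \<le> h\<close>
    by simp
  moreover have "norm (integral {0..h} (\<lambda>s. f s - c)) \<le> e * (h - 0)"
    using \<open>0 \<le> h\<close> cont bound by (intro integral_bound continuous_intros) auto
  ultimately show ?thesis by simp
qed

lemma convolution_rectangle_estimate:
  fixes T :: "real \<Rightarrow> 'e::complex_banach \<Rightarrow> 'e" and S :: "real \<Rightarrow> 'f::complex_banach \<Rightarrow> 'f"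
    and P :: "'f \<Rightarrow> 'e"
  assumes T: "generates A DA T" "bij_betw A DA UNIV" "bounded_linear (inv_into DA A)"
    and S: "generates B DB S" "bij_betw B DB UNIV" "bounded_linear (inv_into DB B)"
    and P: "bounded_linear P"
  shows "\<exists>C\<ge>0. \<forall>h\<in>{0..a}. \<forall>s0\<in>{0..h}. \<forall>s1\<in>{0..h}. \<forall>z\<in>DB.
    norm (integral {0..h} (\<lambda>s. T (h - s) (inv_into DA A (P (S s z))))
          - h *\<^sub>R T (h - s0) (inv_into DA A (P (S s1 z))))
      \<le> C * h\<^sup>2 * (norm z + norm (B z))"
proof -
  obtain C where "C \<ge> 0"
    and oscillation: "\<forall>h\<in>{0..a}. \<forall>s\<in>{0..h}. \<forall>s0\<in>{0..h}. \<forall>s1\<in>{0..h}. \<forall>z\<in>DB.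
      norm (T (h - s) (inv_into DA A (P (S s z))) - T (h - s0) (inv_into DA A (P (S s1 z))))
        \<le> C * h * (norm z + norm (B z))"
    using convolution_integrand_oscillation[OF T S P] by blast
  have C0: "C0_semigroup T" "C0_semigroup S"
    using T(1) S(1) by (simp_all add: generates_def)
  have "norm (integral {0..h} (\<lambda>s. T (h - s) (inv_into DA A (P (S s z))))
          - h *\<^sub>R T (h - s0) (inv_into DA A (P (S s1 z))))
      \<le> C * h * (norm z + norm (B z)) * h"
    if "h \<in> {0..a}" "s0 \<in> {0..h}" "s1 \<in> {0..h}" "z \<in> DB" for h s0 s1 z
    using that oscillation
    by (intro integral_minus_constant_bound C0_semigroup_continuous_on_convolution_integrand[OF C0]
        bounded_linear_compose[OF T(3) P]) auto
  then show ?thesis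
    using \<open>C \<ge> 0\<close> by (intro exI[of _ C]) (simp add: power2_eq_square ac_simps)
qed

theorem lemma4p4:
  fixes Am :: "'e::complex_banach \<Rightarrow> 'e" and domAm :: "'e set"
    and B :: "'f::complex_banach \<Rightarrow> 'f" and domB :: "'f set"
    and L :: "'e \<Rightarrow> 'f"
    and T0 :: "real \<Rightarrow> 'e \<Rightarrow> 'e" and S :: "real \<Rightarrow> 'f \<Rightarrow> 'f"
  assumes Am_lin: "clinear_on domAm Am"
    and B_lin: "clinear_on domB B"
    and L_lin: "clinear_on domAm L"
    and L_surj: "L ` domAm = UNIV"
    and L_bdd: "\<exists>K. \<forall>x\<in>domAm. norm (L x) \<le> K * (norm x + norm (Am x))"
    and A0_gen: "generates Am {x\<in>domAm. L x = 0} T0"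
    and T0_ana: "bounded_analytic_semigroup T0"
    and B_gen: "generates B domB S"
    and closed_AmL: "closed {(x, Am x, L x) | x. x \<in> domAm}"
    and A0_inv: "bij_betw Am {x\<in>domAm. L x = 0} UNIV"
    and A0_inv_bdd: "bounded_linear (inv_into {x\<in>domAm. L x = 0} Am)"
    and B_inv: "bij_betw B domB UNIV"
    and B_inv_bdd: "bounded_linear (inv_into domB B)"
    and Q_ext: "\<exists>Q :: real \<Rightarrow> 'f \<Rightarrow> 'e.
        (\<forall>t\<ge>0. bounded_clinear (Q t) \<and>
           (\<forall>y\<in>domB. Q t y = inv_into {x\<in>domAm. Am x = 0} L (S t y)
                 - T0 t (inv_into {x\<in>domAm. Am x = 0} L y)
                 - integral {0..t} (\<lambda>s. T0 (t - s) (inv_into {x\<in>domAm. Am x = 0} L (S s (B y))))))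
      \<and> (\<exists>M \<epsilon>. \<epsilon> > 0 \<and> (\<forall>t\<in>{0<..<\<epsilon>}. onorm (Q t) \<le> M))"
  shows "\<forall>tmax>0. \<exists>C\<ge>0. \<forall>h\<in>{0..tmax}. \<forall>s0\<in>{0..h}. \<forall>s1\<in>{0..h}. \<forall>y.
           y \<in> domB \<and> B y \<in> domB \<longrightarrow>
           norm (integral {0..h} (\<lambda>s. T0 (h - s) (inv_into {x\<in>domAm. L x = 0} Am
                    (inv_into {x\<in>domAm. Am x = 0} L (S s (B y)))))
                 - h *\<^sub>R T0 (h - s0) (inv_into {x\<in>domAm. L x = 0} Am
                    (inv_into {x\<in>domAm. Am x = 0} L (S s1 (B y)))))
           \<le> C * h\<^sup>2 * (norm (B y) + norm (B (B y)))"
proof -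
  have "bounded_linear (inv_into {x\<in>domAm. Am x = 0} L)"
    by (rule Dirichlet_operator_bounded[OF Am_lin L_lin L_surj closed_AmL A0_inv])
  from convolution_rectangle_estimate[OF A0_gen A0_inv A0_inv_bdd B_gen B_inv B_inv_bdd this]
  show ?thesis by blast
qed

end
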